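(* Let $q$ be a prime power, $m\ge1$, $Q:=q^m$, and let $\mathcal{C}$ be an $[[n,\tilde{k},d]]_{q^m}$ rank-metric code defined from a linear code over $\mathbb{F}_Q$ with generator matrix $G\in\mathbb{F}_Q^{\tilde{k}\times n}$. Then $E\colon\mathbb{F}_Q^n\to\mathbb{F}_Q^{\tilde{k}}$, $E(x):=Gx^\top$, is an $(n-d+1,0)$-extractor for $\mathbb{F}_q$-restricted affine sources over $\mathbb{F}_Q$. Conversely, if a linear function $E\colon\mathbb{F}_Q^n\to\mathbb{F}_Q^{\tilde{k}}$ is an $(n-d+1,0)$-extractor for all $\mathbb{F}_q$-restricted affine sources over $\mathbb{F}_Q$, then its matrix is a generator matrix of an $[[n,\tilde{k},d]]_{q^m}$ code.
   Context: Fix an $\mathbb{F}_q$-linear isomorphism $\varphi\colon\mathbb{F}_Q\to\mathbb{F}_q^m$ (elements mapped to column vectors), and define $\Phi\colon\mathbb{F}_Q^n\to\mathbb{F}_q^{m\times n}$ by $\Phi(x_1,\dots,x_n)=[\varphi(x_1)|\cdots|\varphi(x_n)]$. An $[[n,\tilde{k},d]]_{q^m}$ code is a $\tilde{k}$-dimensional $\mathbb{F}_Q$-linear subspace $\mathcal{C}\subseteq\mathbb{F}_Q^n$ whose rank distance $d$ equals $\min\{\mathrm{rank}_{\mathbb{F}_q}\Phi(c): c\in\mathcal{C},c\neq0\}$. A $k$-dimensional affine source over $\mathbb{F}_Q^n$ is the uniform distribution on $\{xA+\beta: x\in\mathbb{F}_Q^k\}$ for some rank-$k$ matrix $A\in\mathbb{F}_Q^{k\times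 n}$ and $\beta\in\mathbb{F}_Q^n$; it is $\mathbb{F}_q$-restricted if $A$ can be chosen with entries in $\mathbb{F}_q$. A function $f\colon\mathbb{F}_Q^n\to\mathbb{F}_Q^{\tilde{k}}$ is a $(k,0)$-extractor for a class of affine sources if for every source in the class of dimension at least $k$, $f$ applied to it is exactly uniform on $\mathbb{F}_Q^{\tilde{k}}$. *)

theory Defs
  imports "HOL-Probability.Probability_Mass_Function"
begin

text \<open>Vectors of length n over a field are functions nat => 'a vanishing from index n on;
matrices with r rows and c columns are functions nat => nat => 'a (only entries i<r, j<c matter).\<close>

definition vecs :: "nat \<Rightarrow> (nat \<Rightarrow> 'a::zero) set" where
  "vecs n = {x. \<forall>i\<ge>n. x i = 0}"

text \<open>F is a subfield of the (finite) field 'a: plays the role of F_q inside F_Q.\<close>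
definition is_subfield :: "'a::field set \<Rightarrow> bool" where
  "is_subfield F \<longleftrightarrow> 0 \<in> F \<and> 1 \<in> F \<and>
     (\<forall>x\<in>F. \<forall>y\<in>F. x + y \<in> F \<and> x * y \<in> F) \<and>
     (\<forall>x\<in>F. - x \<in> F \<and> inverse x \<in> F)"

definition is_coord_iso :: "'a::field set \<Rightarrow> nat \<Rightarrow> ('a \<Rightarrow> nat \<Rightarrow> 'a) \<Rightarrow> bool" where
  "is_coord_iso F m phi \<longleftrightarrow>
     bij_betw phi UNIV {v. \<forall>i. (i < m \<longrightarrow> v i \<in> F) \<and> (m \<le> i \<longrightarrow> v i = 0)} \<and>
     (\<forall>x y. phi (x + y) = (\<lambda>i. phi x i + phi y i)) \<and>
     (\<forall>a\<in>F. \<forall>x. phi (a * x) = (\<lambda>i. a * phi x i))"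

definition indep_cols :: "'a::field set \<Rightarrow> (nat \<Rightarrow> nat \<Rightarrow> 'a) \<Rightarrow> nat \<Rightarrow> nat set \<Rightarrow> bool" where
  "indep_cols K M r S \<longleftrightarrow>
     (\<forall>a. (\<forall>j\<in>S. a j \<in> K) \<and> (\<forall>i<r. (\<Sum>j\<in>S. a j * M i j) = 0) \<longrightarrow> (\<forall>j\<in>S. a j = 0))"

definition mat_rank :: "'a::field set \<Rightarrow> (nat \<Rightarrow> nat \<Rightarrow> 'a) \<Rightarrow> nat \<Rightarrow> nat \<Rightarrow> nat" where
  "mat_rank K M r c = Max {card S | S. S \<subseteq> {..<c} \<and> indep_cols K M r S}"

definition Phi :: "('a \<Rightarrow> nat \<Rightarrow> 'a) \<Rightarrow> (nat \<Rightarrow> 'a) \<Rightarrow> nat \<Rightarrow> nat \<Rightarrow> 'a" where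
  "Phi phi x = (\<lambda>i j. phi (x j) i)"

definition vec_mat :: "(nat \<Rightarrow> 'a::comm_ring_1) \<Rightarrow> (nat \<Rightarrow> nat \<Rightarrow> 'a) \<Rightarrow> nat \<Rightarrow> nat \<Rightarrow> nat \<Rightarrow> 'a" where
  "vec_mat x A k n = (\<lambda>j. if j < n then (\<Sum>i<k. x i * A i j) else 0)"

definition mat_vec :: "(nat \<Rightarrow> nat \<Rightarrow> 'a::comm_ring_1) \<Rightarrow> nat \<Rightarrow> nat \<Rightarrow> (nat \<Rightarrow> 'a) \<Rightarrow> nat \<Rightarrow> 'a" where
  "mat_vec G kt n x = (\<lambda>i. if i < kt then (\<Sum>j<n. G i j * x j) else 0)"

definition code_of :: "(nat \<Rightarrow> nat \<Rightarrow> 'a::comm_ring_1) \<Rightarrow> nat \<Rightarrow> nat \<Rightarrow> (nat \<Rightarrow> 'a) set" where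
  "code_of G kt n = (\<lambda>y. vec_mat y G kt n) ` vecs kt"

definition rank_wt :: "'a::field set \<Rightarrow> nat \<Rightarrow> ('a \<Rightarrow> nat \<Rightarrow> 'a) \<Rightarrow> nat \<Rightarrow> (nat \<Rightarrow> 'a) \<Rightarrow> nat" where
  "rank_wt F m phi n c = mat_rank F (Phi phi c) m n"

definition is_rank_code_gen :: "'a::field set \<Rightarrow> nat \<Rightarrow> ('a \<Rightarrow> nat \<Rightarrow> 'a) \<Rightarrow>
    (nat \<Rightarrow> nat \<Rightarrow> 'a) \<Rightarrow> nat \<Rightarrow> nat \<Rightarrow> nat \<Rightarrow> bool" where
  "is_rank_code_gen F m phi G n kt d \<longleftrightarrow>
     mat_rank UNIV G kt n = kt \<and>
     (\<forall>c\<in>code_of G kt n. c \<noteq> (\<lambda>_. 0) \<longrightarrow> d \<le> rank_wt F m phi n c) \<and>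
     (\<exists>c\<in>code_of G kt n. c \<noteq> (\<lambda>_. 0) \<and> rank_wt F m phi n c = d)"

definition affine_source :: "(nat \<Rightarrow> nat \<Rightarrow> 'a::{comm_ring_1}) \<Rightarrow> (nat \<Rightarrow> 'a) \<Rightarrow> nat \<Rightarrow> nat \<Rightarrow> (nat \<Rightarrow> 'a) pmf" where
  "affine_source A beta k n = pmf_of_set ((\<lambda>x. (\<lambda>j. vec_mat x A k n j + beta j)) ` vecs k)"

text \<open>f : F_Q^n -> F_Q^kt is a (t,0)-extractor for F_q-restricted affine sources: for every
affine source of dimension k >= t given by a rank-k matrix A with entries in F_q and a
shift beta, f applied to it is exactly uniform on F_Q^kt.\<close>
definition restricted_extractor :: "'a::field set \<Rightarrow> ((nat \<Rightarrow> 'a) \<Rightarrow> (nat \<Rightarrow> 'a)) \<Rightarrow> nat \<Rightarrow> nat \<Rightarrow> nat \<Rightarrow> bool" where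
  "restricted_extractor F f n kt t \<longleftrightarrow>
     (\<forall>k A beta. t \<le> k \<and> (\<forall>i<k. \<forall>j<n. A i j \<in> F) \<and> mat_rank UNIV A k n = k \<and> beta \<in> vecs n
        \<longrightarrow> map_pmf f (affine_source A beta k n) = pmf_of_set (vecs kt))"

end

theory Submission
  imports Defs
begin

text \<open>An \<open>F\<^sub>Q\<close>-linear map \<open>x \<mapsto> G x\<^sup>T\<close> is exactly uniform on the source \<open>x A + \<beta>\<close> iff
  \<open>x \<mapsto> G A\<^sup>T x\<close> is onto, i.e. iff no nonzero codeword \<open>y G\<close> is orthogonal to all rows of \<open>A\<close>.
  A vector of rank weight \<open>r\<close> orthogonal to the rows of an \<open>F\<^sub>q\<close>-matrix of rank \<open>k\<close> satisfies
  \<open>r + k \<le> n\<close> by a counting argument, so for \<open>k > n - d\<close> such a codeword must vanish.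
  Conversely, the \<open>F\<^sub>q\<close>-linear relations among the coordinates of a codeword \<open>c = y G\<close> of rank
  weight \<open>r < d\<close> give \<open>n - r \<ge> n - d + 1\<close> independent \<open>F\<^sub>q\<close>-rows orthogonal to \<open>c\<close>, and on that
  source every output is orthogonal to \<open>y\<close>, so it cannot be uniform. Taking the whole space as
  the source shows that \<open>G\<close> has full rank.\<close>

section \<open>Vectors with entries in a subfield\<close>

definition vecs_over :: "'a::zero set \<Rightarrow> nat set \<Rightarrow> (nat \<Rightarrow> 'a) set" where
  "vecs_over K T = {v. (\<forall>i\<in>T. v i \<in> K) \<and> (\<forall>i. i \<notin> T \<longrightarrow> v i = 0)}"

lemma finite_card_vecs_over:
  assumes "finite T" "finite K"
  shows "finite (vecs_over K T) \<and> card (vecs_over K T) = card K ^ card T"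
  using assms(1)
proof (induction T rule: finite_induct)
  case empty
  have "vecs_over K {} = {\<lambda>_. 0}" by (auto simp: vecs_over_def)
  then show ?case by simp
next
  case (insert x T)
  let ?upd = "\<lambda>(a, w). w(x := a)"
  have "vecs_over K (insert x T) = ?upd ` (K \<times> vecs_over K T)"
  proof
    show "vecs_over K (insert x T) \<subseteq> ?upd ` (K \<times> vecs_over K T)"
    proof
      fix v assume v: "v \<in> vecs_over K (insert x T)"
      then have "(v x, v(x := 0)) \<in> K \<times> vecs_over K T"
        using insert.hyps(2) by (auto simp: vecs_over_def)
      moreover have "v = ?upd (v x, v(x := 0))" by auto
      ultimately show "v \<in> ?upd ` (K \<times> vecs_over K T)" by blast
    qed
    show "?upd ` (K \<times> vecs_over K T) \<subseteq> vecs_over K (insert x T)"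
      using insert.hyps(2) by (auto simp: vecs_over_def)
  qed
  moreover have "inj_on ?upd (K \<times> vecs_over K T)"
  proof (rule inj_onI, clarify)
    fix a w b u assume "w \<in> vecs_over K T" "u \<in> vecs_over K T" and e: "w(x := a) = u(x := b)"
    then have "w x = 0" "u x = 0" using insert.hyps(2) by (auto simp: vecs_over_def)
    then show "a = b \<and> w = u" using e by (metis fun_upd_idem_iff fun_upd_upd fun_upd_same)
  qed
  ultimately show ?case using insert assms(2) by (simp add: card_image card_cartesian_product)
qed

lemma finite_vecs_over: "finite T \<Longrightarrow> finite K \<Longrightarrow> finite (vecs_over K T)"
  using finite_card_vecs_over by blast

lemma card_vecs_over: "finite T \<Longrightarrow> finite K \<Longrightarrow> card (vecs_over K T) = card K ^ card T"
  using finite_card_vecs_over by blast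

lemma vecs_eq_vecs_over: "vecs k = vecs_over UNIV {..<k}"
  by (auto simp: vecs_def vecs_over_def)

lemma finite_vecs: "finite (vecs k :: (nat \<Rightarrow> 'a::{finite,zero}) set)"
  by (simp add: vecs_eq_vecs_over finite_vecs_over)

lemma card_vecs: "card (vecs k :: (nat \<Rightarrow> 'a::{finite,zero}) set) = CARD('a) ^ k"
  by (simp add: vecs_eq_vecs_over card_vecs_over)

lemma zero_in_vecs [simp]: "(\<lambda>_. 0) \<in> vecs k"
  by (simp add: vecs_def)

lemma vecs_nonempty: "vecs k \<noteq> {}"
  using zero_in_vecs by blast

lemma subfield_UNIV: "is_subfield (UNIV :: 'a::field set)"
  by (simp add: is_subfield_def)

lemma subfield_zero: "is_subfield K \<Longrightarrow> 0 \<in> K"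
  and subfield_one: "is_subfield K \<Longrightarrow> 1 \<in> K"
  and subfield_add: "is_subfield K \<Longrightarrow> x \<in> K \<Longrightarrow> y \<in> K \<Longrightarrow> x + y \<in> K"
  and subfield_mult: "is_subfield K \<Longrightarrow> x \<in> K \<Longrightarrow> y \<in> K \<Longrightarrow> x * y \<in> K"
  and subfield_uminus: "is_subfield K \<Longrightarrow> x \<in> K \<Longrightarrow> - x \<in> K"
  and subfield_inverse: "is_subfield K \<Longrightarrow> x \<in> K \<Longrightarrow> inverse x \<in> K"
  by (simp_all add: is_subfield_def)

lemma subfield_diff: "is_subfield K \<Longrightarrow> x \<in> K \<Longrightarrow> y \<in> K \<Longrightarrow> x - y \<in> K"
  using subfield_add subfield_uminus by (metis diff_conv_add_uminus)

lemma subfield_sum: "is_subfield K \<Longrightarrow> (\<And>j. j \<in> S \<Longrightarrow> f j \<in> K) \<Longrightarrow> sum f S \<in> K"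
  by (induction S rule: infinite_finite_induct) (auto intro: subfield_zero subfield_add)

lemma vecs_over_entry: "is_subfield K \<Longrightarrow> v \<in> vecs_over K T \<Longrightarrow> v i \<in> K"
  by (cases "i \<in> T") (auto simp: vecs_over_def subfield_zero)

lemma subfield_power_le_imp_le:
  fixes K :: "'a::field set"
  assumes "is_subfield K" "finite K" "card K ^ a \<le> card K ^ b"
  shows "a \<le> b"
proof -
  have "{0, 1} \<subseteq> K" using assms(1) by (simp add: subfield_zero subfield_one)
  then have "card {0::'a, 1} \<le> card K" using assms(2) by (rule card_mono[rotated])
  then have "1 < card K" by simp
  then show ?thesis using assms(3) by simp
qed

lemma sum_bilinear_swap:
  "(\<Sum>i\<in>I. x i * (\<Sum>j\<in>J. M i j * v j)) = (\<Sum>j\<in>J. (\<Sum>i\<in>I. x i * M i j) * (v j :: 'a::comm_ring_1))"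
proof -
  have "(\<Sum>i\<in>I. x i * (\<Sum>j\<in>J. M i j * v j)) = (\<Sum>i\<in>I. \<Sum>j\<in>J. x i * (M i j * v j))"
    by (simp add: sum_distrib_left)
  also have "\<dots> = (\<Sum>j\<in>J. \<Sum>i\<in>I. x i * (M i j * v j))" by (rule sum.swap)
  also have "\<dots> = (\<Sum>j\<in>J. (\<Sum>i\<in>I. x i * M i j) * v j)"
    by (simp add: sum_distrib_left sum_distrib_right mult_ac)
  finally show ?thesis .
qed

section \<open>Column rank over a subfield\<close>

definition indep_cols_on :: "'a::field set \<Rightarrow> (nat \<Rightarrow> nat \<Rightarrow> 'a) \<Rightarrow> nat set \<Rightarrow> nat set \<Rightarrow> bool" where
  "indep_cols_on K M R S \<longleftrightarrow>
     (\<forall>a. (\<forall>j\<in>S. a j \<in> K) \<and> (\<forall>i\<in>R. (\<Sum>j\<in>S. a j * M i j) = 0) \<longrightarrow> (\<forall>j\<in>S. a j = 0))"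

lemma indep_cols_eq_on: "indep_cols K M r S = indep_cols_on K M {..<r} S"
  unfolding indep_cols_def indep_cols_on_def by (simp only: Ball_def lessThan_iff)

lemma col_comb_inj_on:
  assumes K: "is_subfield K" and ind: "indep_cols_on K M R S"
  shows "inj_on (\<lambda>a i. if i \<in> R then \<Sum>j\<in>S. a j * M i j else 0) (vecs_over K S)"
proof (rule inj_onI)
  fix a b assume a: "a \<in> vecs_over K S" and b: "b \<in> vecs_over K S"
    and e: "(\<lambda>i. if i \<in> R then \<Sum>j\<in>S. a j * M i j else 0) = (\<lambda>i. if i \<in> R then \<Sum>j\<in>S. b j * M i j else 0)"
  have "\<forall>i\<in>R. (\<Sum>j\<in>S. (a j - b j) * M i j) = 0"
    using e by (auto simp: fun_eq_iff left_diff_distrib sum_subtractf split: if_splits)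
  moreover have "\<forall>j\<in>S. a j - b j \<in> K"
    using a b K by (auto simp: vecs_over_def intro: subfield_diff)
  ultimately have "\<forall>j\<in>S. a j - b j = 0"
    using ind[unfolded indep_cols_on_def, rule_format, of "\<lambda>j. a j - b j"] by blast
  then show "a = b" using a b by (auto simp: vecs_over_def fun_eq_iff)
qed

lemma card_indep_cols_le:
  assumes K: "is_subfield K" "finite K" and fin: "finite R" "finite S"
    and ent: "\<forall>i\<in>R. \<forall>j\<in>S. M i j \<in> K" and ind: "indep_cols_on K M R S"
  shows "card S \<le> card R"
proof -
  let ?comb = "\<lambda>a i. if i \<in> R then \<Sum>j\<in>S. a j * M i j else 0"
  have "?comb ` vecs_over K S \<subseteq> vecs_over K R"
    using ent K(1) by (auto simp: vecs_over_def intro!: subfield_sum subfield_mult)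
  then have "card (?comb ` vecs_over K S) \<le> card (vecs_over K R)"
    by (intro card_mono finite_vecs_over fin K)
  moreover have "card (?comb ` vecs_over K S) = card (vecs_over K S)"
    by (rule card_image[OF col_comb_inj_on[OF K(1) ind]])
  ultimately have "card K ^ card S \<le> card K ^ card R"
    by (simp add: card_vecs_over fin K)
  then show ?thesis by (rule subfield_power_le_imp_le[OF K])
qed

lemma mat_rank_attained: "\<exists>S. S \<subseteq> {..<c} \<and> indep_cols K M r S \<and> card S = mat_rank K M r c"
proof -
  let ?cards = "{card S | S. S \<subseteq> {..<c} \<and> indep_cols K M r S}"
  have "?cards \<subseteq> {..c}" by (auto dest: card_mono[rotated])
  then have "finite ?cards" by (rule finite_subset) simp
  moreover have "card {} \<in> ?cards" by (auto simp: indep_cols_def intro!: exI[of _ "{}"])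
  ultimately have "Max ?cards \<in> ?cards" by (intro Max_in) auto
  then show ?thesis unfolding mat_rank_def by auto
qed

lemma card_le_mat_rank:
  assumes "S \<subseteq> {..<c}" "indep_cols K M r S"
  shows "card S \<le> mat_rank K M r c"
proof -
  let ?cards = "{card S | S. S \<subseteq> {..<c} \<and> indep_cols K M r S}"
  have "?cards \<subseteq> {..c}" by (auto dest: card_mono[rotated])
  then have "finite ?cards" by (rule finite_subset) simp
  then show ?thesis unfolding mat_rank_def using assms by (intro Max_ge) auto
qed

lemma mat_rank_le_rows:
  assumes "is_subfield K" "finite K" "\<forall>i<r. \<forall>j<c. M i j \<in> K"
  shows "mat_rank K M r c \<le> r"
proof -
  obtain S where S: "S \<subseteq> {..<c}" "indep_cols K M r S" "card S = mat_rank K M r c"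
    using mat_rank_attained by blast
  have "card S \<le> card {..<r}"
    using S assms by (intro card_indep_cols_le) (auto simp: indep_cols_eq_on finite_subset)
  then show ?thesis using S(3) by simp
qed

lemma col_comb_of_dependent_insert:
  assumes K: "is_subfield K" and fS: "finite S" and jS: "j \<notin> S"
    and ind: "indep_cols K M r S" and dep: "\<not> indep_cols K M r (insert j S)"
  shows "\<exists>b\<in>vecs_over K S. \<forall>i<r. M i j = (\<Sum>s\<in>S. b s * M i s)"
proof -
  obtain a where aK: "\<forall>t\<in>insert j S. a t \<in> K"
      and a0: "\<forall>i<r. a j * M i j + (\<Sum>t\<in>S. a t * M i t) = 0" and nz: "\<exists>t\<in>insert j S. a t \<noteq> 0"
    using dep fS jS unfolding indep_cols_def by auto
  have aj: "a j \<noteq> 0"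
  proof
    assume "a j = 0"
    then have "\<forall>t\<in>S. a t = 0" using ind aK a0 unfolding indep_cols_def by auto
    with \<open>a j = 0\<close> nz show False by blast
  qed
  define b where "b = (\<lambda>s. if s \<in> S then - a s * inverse (a j) else 0)"
  have "b \<in> vecs_over K S"
    using aK K by (auto simp: b_def vecs_over_def intro!: subfield_mult subfield_uminus subfield_inverse)
  moreover have "M i j = (\<Sum>s\<in>S. b s * M i s)" if i: "i < r" for i
  proof -
    have "(\<Sum>s\<in>S. b s * M i s) = - inverse (a j) * (\<Sum>s\<in>S. a s * M i s)"
      by (simp add: b_def sum_distrib_left mult_ac)
    also have "(\<Sum>s\<in>S. a s * M i s) = - (a j * M i j)"
      using a0 i by (simp add: eq_neg_iff_add_eq_0 add.commute)
    finally show ?thesis using aj by simp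
  qed
  ultimately show ?thesis by blast
qed

lemma mat_rank_cols_span:
  assumes K: "is_subfield K" and S: "S \<subseteq> {..<c}" "indep_cols K M r S" "card S = mat_rank K M r c"
    and j: "j < c"
  shows "\<exists>b\<in>vecs_over K S. \<forall>i<r. M i j = (\<Sum>s\<in>S. b s * M i s)"
proof (cases "j \<in> S")
  case True
  have fS: "finite S" using S(1) finite_subset by blast
  let ?b = "\<lambda>s. if s = j then 1 else 0"
  have "?b \<in> vecs_over K S" using True K by (auto simp: vecs_over_def subfield_zero subfield_one)
  moreover have "M i j = (\<Sum>s\<in>S. ?b s * M i s)" for i
  proof -
    have "(\<Sum>s\<in>S. ?b s * M i s) = (\<Sum>s\<in>S. if s = j then M i s else 0)" by (rule sum.cong) auto
    then show ?thesis using True fS by simp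
  qed
  ultimately show ?thesis by (intro bexI[of _ ?b]) auto
next
  case False
  have fS: "finite S" using S(1) finite_subset by blast
  have "\<not> indep_cols K M r (insert j S)"
  proof
    assume "indep_cols K M r (insert j S)"
    then have "card (insert j S) \<le> mat_rank K M r c" using S(1) j by (intro card_le_mat_rank) auto
    then show False using False fS S(3) by simp
  qed
  then show ?thesis by (rule col_comb_of_dependent_insert[OF K fS False S(2)])
qed

section \<open>Full rank over the whole field\<close>

lemma vec_mat_zero [simp]: "vec_mat (\<lambda>_. 0) A k n = (\<lambda>_. 0)"
  by (simp add: vec_mat_def fun_eq_iff)

lemma vec_mat_diff: "vec_mat (\<lambda>i. x i - y i) A k n = (\<lambda>j. vec_mat x A k n j - vec_mat y A k n j)"
  by (simp add: vec_mat_def fun_eq_iff left_diff_distrib sum_subtractf)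

lemma mat_vec_in_vecs: "mat_vec N r c x \<in> vecs r"
  by (simp add: mat_vec_def vecs_def)

lemma inj_on_vec_mat_iff_kernel:
  "inj_on (\<lambda>x. vec_mat x A k n) (vecs k) \<longleftrightarrow>
     (\<forall>x\<in>vecs k. vec_mat x A k n = (\<lambda>_. 0) \<longrightarrow> x = (\<lambda>_. 0))"
proof
  assume inj: "inj_on (\<lambda>x. vec_mat x A k n) (vecs k)"
  show "\<forall>x\<in>vecs k. vec_mat x A k n = (\<lambda>_. 0) \<longrightarrow> x = (\<lambda>_. 0)"
    using inj_onD[OF inj _ _ zero_in_vecs] by simp
next
  assume ker: "\<forall>x\<in>vecs k. vec_mat x A k n = (\<lambda>_. 0) \<longrightarrow> x = (\<lambda>_. 0)"
  show "inj_on (\<lambda>x. vec_mat x A k n) (vecs k)"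
  proof (rule inj_onI)
    fix x y assume "x \<in> vecs k" "y \<in> vecs k" "vec_mat x A k n = vec_mat y A k n"
    then have "(\<lambda>i. x i - y i) \<in> vecs k" "vec_mat (\<lambda>i. x i - y i) A k n = (\<lambda>_. 0)"
      by (simp_all add: vecs_def vec_mat_diff)
    then have "(\<lambda>i. x i - y i) = (\<lambda>_. 0)" using ker by blast
    then show "x = y" by (simp add: fun_eq_iff)
  qed
qed

lemma indep_cols_onto:
  fixes N :: "nat \<Rightarrow> nat \<Rightarrow> 'a::{finite,field}"
  assumes fS: "finite S" and ind: "indep_cols UNIV N r S" and cS: "card S = r"
  shows "(\<lambda>a l. if l < r then \<Sum>s\<in>S. a s * N l s else 0) ` vecs_over UNIV S = vecs r"
proof (rule card_subset_eq[OF finite_vecs])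
  let ?comb = "\<lambda>a l. if l < r then \<Sum>s\<in>S. a s * N l s else 0"
  show "?comb ` vecs_over UNIV S \<subseteq> vecs r" by (auto simp: vecs_def)
  have "inj_on ?comb (vecs_over UNIV S)"
    using col_comb_inj_on[OF subfield_UNIV, of N "{..<r}" S] ind
    by (simp add: indep_cols_eq_on)
  then show "card (?comb ` vecs_over UNIV S) = card (vecs r :: (nat \<Rightarrow> 'a) set)"
    by (simp add: card_image card_vecs_over fS card_vecs cS)
qed

lemma full_rank_imp_inj_vec_mat:
  fixes A :: "nat \<Rightarrow> nat \<Rightarrow> 'a::{finite,field}"
  assumes rk: "mat_rank UNIV A k n = k"
  shows "inj_on (\<lambda>x. vec_mat x A k n) (vecs k)"
  unfolding inj_on_vec_mat_iff_kernel
proof (intro ballI impI ext)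
  fix x l assume x: "x \<in> vecs k" and xA: "vec_mat x A k n = (\<lambda>_. 0)"
  show "x l = 0"
  proof (cases "l < k")
    case False then show ?thesis using x by (simp add: vecs_def)
  next
    case True
    obtain S where S: "S \<subseteq> {..<n}" "indep_cols UNIV A k S" "card S = k"
      using mat_rank_attained rk by metis
    have "(\<lambda>i. if i = l then 1 else 0) \<in> (vecs k :: (nat \<Rightarrow> 'a) set)"
      using True by (simp add: vecs_def)
    then have "(\<lambda>i. if i = l then 1 else 0) \<in> (\<lambda>a i. if i < k then \<Sum>s\<in>S. a s * A i s else 0) ` vecs_over UNIV S"
      unfolding indep_cols_onto[OF finite_subset[OF S(1) finite_lessThan] S(2,3)] .
    then obtain a where a: "(\<lambda>i. if i = l then 1 else 0) = (\<lambda>i. if i < k then \<Sum>s\<in>S. a s * A i s else 0)"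
      by blast
    have ai: "(\<Sum>s\<in>S. A i s * a s) = (if i = l then 1 else 0)" if "i < k" for i
      using fun_cong[OF a, of i] that by (simp add: mult.commute)
    have "x l = (\<Sum>i<k. if i = l then x i else 0)" using True by simp
    also have "\<dots> = (\<Sum>i<k. x i * (\<Sum>s\<in>S. A i s * a s))" by (intro sum.cong) (simp_all add: ai)
    also have "\<dots> = (\<Sum>s\<in>S. (\<Sum>i<k. x i * A i s) * a s)" by (rule sum_bilinear_swap)
    also have "\<dots> = 0"
    proof (intro sum.neutral ballI)
      fix s assume "s \<in> S"
      then have "s < n" using S(1) by blast
      then show "(\<Sum>i<k. x i * A i s) * a s = 0" using fun_cong[OF xA, of s] by (simp add: vec_mat_def)
    qed
    finally show ?thesis .
  qed
qed

lemma inj_vec_mat_imp_full_rank: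
  fixes N :: "nat \<Rightarrow> nat \<Rightarrow> 'a::{finite,field}"
  assumes inj: "inj_on (\<lambda>y. vec_mat y N r c) (vecs r)"
  shows "mat_rank UNIV N r c = r"
proof -
  obtain S where S: "S \<subseteq> {..<c}" "indep_cols UNIV N r S" "card S = mat_rank UNIV N r c"
    using mat_rank_attained by blast
  have fS: "finite S" using S(1) finite_subset by blast
  have "r \<le> card S"
  proof (rule ccontr)
    assume lt: "\<not> r \<le> card S"
    have "\<not> indep_cols_on UNIV (\<lambda>j l. N l j) S {..<r}"
      using card_indep_cols_le[OF subfield_UNIV finite_class.finite_UNIV fS finite_lessThan] lt by auto
    then obtain y where y0: "\<forall>s\<in>S. (\<Sum>l<r. y l * N l s) = 0" and ynz: "\<exists>l<r. y l \<noteq> 0"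
      unfolding indep_cols_on_def by auto
    define y' where "y' = (\<lambda>l. if l < r then y l else 0)"
    have y': "y' \<in> vecs r" by (simp add: y'_def vecs_def)
    have "vec_mat y' N r c j = 0" for j
    proof (cases "j < c")
      case True
      obtain b where b: "\<forall>l<r. N l j = (\<Sum>s\<in>S. b s * N l s)"
        using mat_rank_cols_span[OF subfield_UNIV S True] by blast
      have "(\<Sum>l<r. y' l * N l j) = (\<Sum>l<r. y l * (\<Sum>s\<in>S. N l s * b s))"
        using b by (simp add: y'_def mult.commute)
      also have "\<dots> = (\<Sum>s\<in>S. (\<Sum>l<r. y l * N l s) * b s)" by (rule sum_bilinear_swap)
      finally show ?thesis using y0 True by (simp add: vec_mat_def)
    qed (simp add: vec_mat_def)
    then have "y' = (\<lambda>_. 0)" using inj y' by (auto simp: inj_on_vec_mat_iff_kernel fun_eq_iff)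
    moreover obtain l where "l < r" "y l \<noteq> 0" using ynz by blast
    ultimately show False by (metis y'_def)
  qed
  moreover have "mat_rank UNIV N r c \<le> r" by (rule mat_rank_le_rows[OF subfield_UNIV]) simp_all
  ultimately show ?thesis using S(3) by simp
qed

lemma full_rank_imp_mat_vec_onto:
  fixes N :: "nat \<Rightarrow> nat \<Rightarrow> 'a::{finite,field}"
  assumes rk: "mat_rank UNIV N r c = r"
  shows "mat_vec N r c ` vecs c = vecs r"
proof
  show "mat_vec N r c ` vecs c \<subseteq> vecs r" using mat_vec_in_vecs by blast
  obtain S where S: "S \<subseteq> {..<c}" "indep_cols UNIV N r S" "card S = r"
    using mat_rank_attained rk by metis
  show "vecs r \<subseteq> mat_vec N r c ` vecs c"
  proof
    fix z :: "nat \<Rightarrow> 'a" assume "z \<in> vecs r"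
    then obtain a where a: "a \<in> vecs_over UNIV S" "z = (\<lambda>l. if l < r then \<Sum>s\<in>S. a s * N l s else 0)"
      using indep_cols_onto[OF finite_subset[OF S(1) finite_lessThan] S(2,3)] by blast
    have "a \<in> vecs c" using a(1) S(1) by (auto simp: vecs_over_def vecs_def)
    moreover have "mat_vec N r c a = z"
      using a S(1) by (auto simp: mat_vec_def vecs_over_def mult.commute fun_eq_iff
          intro!: sum.mono_neutral_cong_right)
    ultimately show "z \<in> mat_vec N r c ` vecs c" by blast
  qed
qed

lemma mat_vec_onto_imp_full_rank:
  fixes N :: "nat \<Rightarrow> nat \<Rightarrow> 'a::{finite,field}"
  assumes onto: "mat_vec N r c ` vecs c = vecs r"
  shows "mat_rank UNIV N r c = r"
proof -
  obtain S where S: "S \<subseteq> {..<c}" "indep_cols UNIV N r S" "card S = mat_rank UNIV N r c"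
    using mat_rank_attained by blast
  have fS: "finite S" using S(1) finite_subset by blast
  obtain B where B: "\<And>j. j < c \<Longrightarrow> \<forall>l<r. N l j = (\<Sum>s\<in>S. B j s * N l s)"
    using mat_rank_cols_span[OF subfield_UNIV S] by metis
  let ?comb = "\<lambda>a l. if l < r then \<Sum>s\<in>S. a s * N l s else 0"
  have mem: "mat_vec N r c x \<in> ?comb ` vecs_over UNIV S" for x
  proof
    show "(\<lambda>s. if s \<in> S then \<Sum>j<c. x j * B j s else 0) \<in> vecs_over UNIV S"
      by (simp add: vecs_over_def)
    have "(\<Sum>j<c. N l j * x j) = (\<Sum>s\<in>S. (\<Sum>j<c. x j * B j s) * N l s)" if "l < r" for l
    proof -
      have "(\<Sum>j<c. N l j * x j) = (\<Sum>j<c. x j * (\<Sum>s\<in>S. B j s * N l s))"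
        using B that by (simp add: mult.commute)
      also have "\<dots> = (\<Sum>s\<in>S. (\<Sum>j<c. x j * B j s) * N l s)" by (rule sum_bilinear_swap)
      finally show ?thesis .
    qed
    then show "mat_vec N r c x = ?comb (\<lambda>s. if s \<in> S then \<Sum>j<c. x j * B j s else 0)"
      by (simp add: mat_vec_def fun_eq_iff)
  qed
  have "mat_vec N r c ` vecs c \<subseteq> ?comb ` vecs_over UNIV S" by (intro image_subsetI mem)
  then have "vecs r \<subseteq> ?comb ` vecs_over UNIV S" by (simp only: onto)
  then have "card (vecs r :: (nat \<Rightarrow> 'a) set) \<le> card (vecs_over (UNIV :: 'a set) S)"
    by (meson card_image_le card_mono finite_imageI finite_vecs_over fS finite_class.finite_UNIV order_trans)
  then have "CARD('a) ^ r \<le> CARD('a) ^ card S" by (simp add: card_vecs card_vecs_over fS)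
  then have "r \<le> card S" by (rule subfield_power_le_imp_le[OF subfield_UNIV finite_class.finite_UNIV])
  moreover have "mat_rank UNIV N r c \<le> r" by (rule mat_rank_le_rows[OF subfield_UNIV]) simp_all
  ultimately show ?thesis using S(3) by simp
qed

lemma mat_rank_unit_columns:
  fixes A :: "nat \<Rightarrow> nat \<Rightarrow> 'a::{finite,field}"
  assumes \<sigma>: "bij_betw \<sigma> {..<k} T" and T: "T \<subseteq> {..<n}"
    and unit: "\<And>i j. i < k \<Longrightarrow> j \<in> T \<Longrightarrow> A i j = (if j = \<sigma> i then 1 else 0)"
  shows "mat_rank UNIV A k n = k"
proof (rule antisym)
  show "mat_rank UNIV A k n \<le> k" by (rule mat_rank_le_rows[OF subfield_UNIV]) simp_all
  have "indep_cols UNIV A k T" unfolding indep_cols_def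
  proof (intro allI impI ballI)
    fix a j assume h: "(\<forall>j\<in>T. a j \<in> UNIV) \<and> (\<forall>i<k. (\<Sum>j\<in>T. a j * A i j) = 0)" and j: "j \<in> T"
    then obtain i where i: "i < k" "\<sigma> i = j" using \<sigma> by (auto simp: bij_betw_def)
    have "(\<Sum>l\<in>T. a l * A i l) = (\<Sum>l\<in>T. if l = \<sigma> i then a l else 0)"
      using unit i(1) by (intro sum.cong) auto
    also have "\<dots> = a j" using j i T finite_subset by fastforce
    finally show "a j = 0" using h i by simp
  qed
  then have "card T \<le> mat_rank UNIV A k n" using T by (rule card_le_mat_rank[rotated])
  then show "k \<le> mat_rank UNIV A k n" using bij_betw_same_card[OF \<sigma>] by simp
qed

section \<open>Rank weight\<close>

definition indep_over :: "'a::field set \<Rightarrow> (nat \<Rightarrow> 'a) \<Rightarrow> nat set \<Rightarrow> bool" where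
  "indep_over K c S \<longleftrightarrow>
     (\<forall>a. (\<forall>j\<in>S. a j \<in> K) \<and> (\<Sum>j\<in>S. a j * c j) = 0 \<longrightarrow> (\<forall>j\<in>S. a j = 0))"

lemma coord_iso_add: "is_coord_iso F m phi \<Longrightarrow> phi (x + y) = (\<lambda>i. phi x i + phi y i)"
  and coord_iso_smult: "is_coord_iso F m phi \<Longrightarrow> a \<in> F \<Longrightarrow> phi (a * x) = (\<lambda>i. a * phi x i)"
  and coord_iso_inj: "is_coord_iso F m phi \<Longrightarrow> inj phi"
  unfolding is_coord_iso_def by (auto dest: bij_betw_imp_inj_on)

lemma coord_iso_vanishes: "is_coord_iso F m phi \<Longrightarrow> m \<le> i \<Longrightarrow> phi x i = 0"
  unfolding is_coord_iso_def bij_betw_def by blast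

lemma coord_iso_zero:
  assumes iso: "is_coord_iso F m phi" shows "phi 0 = (\<lambda>_. 0)"
proof
  fix i
  have "phi 0 i = phi 0 i + phi 0 i" using coord_iso_add[OF iso, of 0 0] by (metis add_0)
  then show "phi 0 i = 0" by (metis add_cancel_right_right)
qed

lemma coord_iso_eq_iff:
  assumes iso: "is_coord_iso F m phi"
  shows "(\<forall>i<m. phi x i = phi y i) \<longleftrightarrow> x = y"
proof
  assume "\<forall>i<m. phi x i = phi y i"
  then have "phi x = phi y" using coord_iso_vanishes[OF iso] by (metis ext not_less)
  then show "x = y" using coord_iso_inj[OF iso] by (rule injD[rotated])
qed simp

lemma coord_iso_sum:
  assumes iso: "is_coord_iso F m phi" and aF: "\<forall>j\<in>S. a j \<in> F"
  shows "phi (\<Sum>j\<in>S. a j * c j) = (\<lambda>i. \<Sum>j\<in>S. a j * phi (c j) i)"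
  using aF
  by (induction S rule: infinite_finite_induct)
    (simp_all add: coord_iso_zero[OF iso] coord_iso_add[OF iso] coord_iso_smult[OF iso])

text \<open>Hence \<open>rank_wt F m phi n c\<close> is the \<open>F\<close>-dimension of the span of the coordinates
  of \<open>c\<close>.\<close>

lemma indep_cols_Phi_iff:
  assumes iso: "is_coord_iso F m phi"
  shows "indep_cols F (Phi phi c) m S \<longleftrightarrow> indep_over F c S"
proof -
  have "(\<forall>i<m. (\<Sum>j\<in>S. a j * Phi phi c i j) = 0) \<longleftrightarrow> (\<Sum>j\<in>S. a j * c j) = 0"
    if aF: "\<forall>j\<in>S. a j \<in> F" for a
  proof -
    have "(\<forall>i<m. (\<Sum>j\<in>S. a j * Phi phi c i j) = 0) \<longleftrightarrow>
        (\<forall>i<m. phi (\<Sum>j\<in>S. a j * c j) i = phi 0 i)"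
      by (simp add: coord_iso_sum[OF iso aF] coord_iso_zero[OF iso] Phi_def)
    also have "\<dots> \<longleftrightarrow> (\<Sum>j\<in>S. a j * c j) = 0" by (rule coord_iso_eq_iff[OF iso])
    finally show ?thesis .
  qed
  then show ?thesis unfolding indep_cols_def indep_over_def by blast
qed

lemma rank_wt_basis:
  assumes K: "is_subfield F" and iso: "is_coord_iso F m phi"
  obtains S where "S \<subseteq> {..<n}" "card S = rank_wt F m phi n c" "indep_over F c S"
    "\<And>j. j < n \<Longrightarrow> \<exists>b\<in>vecs_over F S. c j = (\<Sum>s\<in>S. b s * c s)"
proof -
  obtain S where S: "S \<subseteq> {..<n}" "indep_cols F (Phi phi c) m S" "card S = rank_wt F m phi n c"
    using mat_rank_attained unfolding rank_wt_def by blast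
  have "\<exists>b\<in>vecs_over F S. c j = (\<Sum>s\<in>S. b s * c s)" if j: "j < n" for j
  proof -
    obtain b where b: "b \<in> vecs_over F S" "\<forall>i<m. Phi phi c i j = (\<Sum>s\<in>S. b s * Phi phi c i s)"
      using mat_rank_cols_span[OF K S(1,2) S(3)[unfolded rank_wt_def] j] by blast
    have bF: "\<forall>s\<in>S. b s \<in> F" using b(1) by (simp add: vecs_over_def)
    have "\<forall>i<m. phi (c j) i = phi (\<Sum>s\<in>S. b s * c s) i"
      using b(2) by (simp add: coord_iso_sum[OF iso bF] Phi_def)
    then show ?thesis using b(1) coord_iso_eq_iff[OF iso] by blast
  qed
  then show ?thesis using that S indep_cols_Phi_iff[OF iso] by blast
qed

lemma orthogonal_rows_sum:
  assumes orth: "\<forall>i<k. (\<Sum>j<n. A i j * c j) = 0"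
  shows "(\<Sum>j<n. vec_mat w A k n j * c j) = 0"
proof -
  have "(\<Sum>j<n. vec_mat w A k n j * c j) = (\<Sum>i<k. w i * (\<Sum>j<n. A i j * c j))"
    by (simp add: vec_mat_def sum_bilinear_swap)
  also have "\<dots> = 0" using orth by simp
  finally show ?thesis .
qed

text \<open>The key counting step: \<open>(w, a) \<mapsto> w A + a\<close> embeds \<open>F\<^sup>k \<times> F\<^sup>S\<close> into \<open>F\<^sup>n\<close>,
  because pairing with \<open>c\<close> kills \<open>w A\<close> and is injective on vectors supported on \<open>S\<close>.\<close>

lemma inj_on_row_comb_plus:
  fixes A :: "nat \<Rightarrow> nat \<Rightarrow> 'a::{finite,field}"
  assumes K: "is_subfield F" and rk: "mat_rank UNIV A k n = k"
    and orth: "\<forall>i<k. (\<Sum>j<n. A i j * c j) = 0"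
    and S: "S \<subseteq> {..<n}" "indep_over F c S"
  shows "inj_on (\<lambda>(w, a) j. vec_mat w A k n j + a j) (vecs_over F {..<k} \<times> vecs_over F S)"
proof (rule inj_onI, clarify)
  fix w a w' a'
  assume w: "w \<in> vecs_over F {..<k}" "w' \<in> vecs_over F {..<k}"
    and a: "a \<in> vecs_over F S" "a' \<in> vecs_over F S"
    and e: "(\<lambda>j. vec_mat w A k n j + a j) = (\<lambda>j. vec_mat w' A k n j + a' j)"
  define u where "u = (\<lambda>i. w i - w' i)"
  define b where "b = (\<lambda>j. a j - a' j)"
  have b: "b j = - vec_mat u A k n j" for j
    using fun_cong[OF e, of j] by (simp add: u_def b_def vec_mat_diff algebra_simps)
  have "(\<Sum>j\<in>S. b j * c j) = (\<Sum>j<n. b j * c j)"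
    using S(1) a by (intro sum.mono_neutral_left) (auto simp: b_def vecs_over_def)
  also have "\<dots> = - (\<Sum>j<n. vec_mat u A k n j * c j)" by (simp add: b sum_negf)
  also have "\<dots> = 0" using orthogonal_rows_sum[OF orth] by simp
  finally have "(\<Sum>j\<in>S. b j * c j) = 0" .
  moreover have "\<forall>j\<in>S. b j \<in> F"
    using a K by (auto simp: b_def vecs_over_def intro: subfield_diff)
  ultimately have "\<forall>j\<in>S. b j = 0" using spec[OF S(2)[unfolded indep_over_def], of b] by blast
  then have "a = a'" using a by (auto simp: b_def vecs_over_def fun_eq_iff)
  moreover have "u = (\<lambda>_. 0)"
  proof -
    have "b = (\<lambda>_. 0)" using \<open>a = a'\<close> by (simp add: b_def fun_eq_iff)
    then have "vec_mat u A k n = (\<lambda>_. 0)" using b by (simp add: fun_eq_iff)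
    moreover have "u \<in> vecs k" using w by (auto simp: u_def vecs_def vecs_over_def)
    ultimately show ?thesis
      using full_rank_imp_inj_vec_mat[OF rk] by (simp add: inj_on_vec_mat_iff_kernel)
  qed
  ultimately show "w = w' \<and> a = a'" by (simp add: u_def fun_eq_iff)
qed

lemma rank_wt_add_le:
  fixes A :: "nat \<Rightarrow> nat \<Rightarrow> 'a::{finite,field}"
  assumes K: "is_subfield F" and iso: "is_coord_iso F m phi"
    and AF: "\<forall>i<k. \<forall>j<n. A i j \<in> F" and rk: "mat_rank UNIV A k n = k"
    and orth: "\<forall>i<k. (\<Sum>j<n. A i j * c j) = 0"
  shows "rank_wt F m phi n c + k \<le> n"
proof -
  obtain S where S: "S \<subseteq> {..<n}" "card S = rank_wt F m phi n c" "indep_over F c S"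
    using rank_wt_basis[OF K iso] by metis
  have fS: "finite S" using S(1) finite_subset by blast
  let ?emb = "\<lambda>(w, a) j. vec_mat w A k n j + a j"
  have "?emb (w, a) \<in> vecs_over F {..<n}" if w: "w \<in> vecs_over F {..<k}" and a: "a \<in> vecs_over F S" for w a
  proof -
    have "vec_mat w A k n j + a j \<in> F" if "j < n" for j
      using that AF vecs_over_entry[OF K w] vecs_over_entry[OF K a] unfolding vec_mat_def
      by (auto intro!: subfield_add[OF K] subfield_sum[OF K] subfield_mult[OF K])
    moreover have "a j = 0" if "\<not> j < n" for j using that a S(1) by (auto simp: vecs_over_def)
    ultimately show ?thesis by (simp add: vecs_over_def vec_mat_def)
  qed
  then have "?emb ` (vecs_over F {..<k} \<times> vecs_over F S) \<subseteq> vecs_over F {..<n}" by auto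
  then have "card (vecs_over F {..<k} \<times> vecs_over F S) \<le> card (vecs_over F {..<n})"
    using inj_on_row_comb_plus[OF K rk orth S(1,3)]
    by (intro card_inj_on_le finite_vecs_over) simp_all
  then have "card F ^ (k + card S) \<le> card F ^ n"
    by (simp add: card_cartesian_product card_vecs_over fS power_add)
  then have "k + card S \<le> n" by (rule subfield_power_le_imp_le[OF K finite])
  then show ?thesis using S(2) by simp
qed

text \<open>The relations expressing the coordinates outside an \<open>F\<close>-basis \<open>S\<close> of the
  coordinates of \<open>c\<close> in terms of that basis form \<open>n - rank_wt c\<close> independent rows over \<open>F\<close>
  orthogonal to \<open>c\<close>.\<close>

lemma exists_orthogonal_restricted_matrix:
  fixes c :: "nat \<Rightarrow> 'a::{finite,field}" and n :: nat
  assumes K: "is_subfield F" and iso: "is_coord_iso F m phi"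
  defines "k \<equiv> n - rank_wt F m phi n c"
  obtains A where "\<forall>i<k. \<forall>j<n. A i j \<in> F" "mat_rank UNIV A k n = k"
    "\<forall>i<k. (\<Sum>j<n. A i j * c j) = 0"
proof -
  obtain S where S: "S \<subseteq> {..<n}" "card S = rank_wt F m phi n c"
    and span: "\<And>j. j < n \<Longrightarrow> \<exists>b\<in>vecs_over F S. c j = (\<Sum>s\<in>S. b s * c s)"
    using rank_wt_basis[OF K iso] by metis
  obtain B where B: "\<And>j. j < n \<Longrightarrow> B j \<in> vecs_over F S \<and> c j = (\<Sum>s\<in>S. B j s * c s)"
    using span by metis
  define T where "T = {..<n} - S"
  have "card T = k" using S by (simp add: T_def k_def card_Diff_subset finite_subset)
  then obtain \<sigma> where \<sigma>: "bij_betw \<sigma> {..<k} T"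
    using ex_bij_betw_nat_finite[of T] by (auto simp: T_def atLeast0LessThan)
  have \<sigma>T: "\<sigma> i < n" "\<sigma> i \<notin> S" if "i < k" for i
    using \<sigma> that by (auto simp: bij_betw_def T_def)
  define A where "A = (\<lambda>i j. (if j = \<sigma> i then 1 else 0) - B (\<sigma> i) j)"
  show thesis
  proof
    show "\<forall>i<k. \<forall>j<n. A i j \<in> F"
    proof (intro allI impI)
      fix i j assume "i < k" "j < n"
      then have "B (\<sigma> i) j \<in> F" using B \<sigma>T(1) vecs_over_entry[OF K] by blast
      then show "A i j \<in> F" using K by (simp add: A_def subfield_diff subfield_zero subfield_one)
    qed
    show "mat_rank UNIV A k n = k"
    proof (rule mat_rank_unit_columns[OF \<sigma>])
      show "T \<subseteq> {..<n}" by (simp add: T_def)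
      fix i j assume "i < k" "j \<in> T"
      then have "B (\<sigma> i) j = 0" using B \<sigma>T by (auto simp: T_def vecs_over_def)
      then show "A i j = (if j = \<sigma> i then 1 else 0)" by (simp add: A_def)
    qed
    show "\<forall>i<k. (\<Sum>j<n. A i j * c j) = 0"
    proof (intro allI impI)
      fix i assume i: "i < k"
      have "(\<Sum>j<n. B (\<sigma> i) j * c j) = (\<Sum>s\<in>S. B (\<sigma> i) s * c s)"
        using B[OF \<sigma>T(1)[OF i]] S(1)
        by (intro sum.mono_neutral_right) (auto simp: vecs_over_def)
      also have "\<dots> = c (\<sigma> i)" using B[OF \<sigma>T(1)[OF i]] by simp
      also have "\<dots> = (\<Sum>j<n. (if j = \<sigma> i then 1 else 0) * c j)"
        using \<sigma>T(1)[OF i] by (simp add: if_distrib[of "\<lambda>x. x * _"] cong: if_cong)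
      finally show "(\<Sum>j<n. A i j * c j) = 0"
        by (simp add: A_def left_diff_distrib sum_subtractf)
    qed
  qed
qed

section \<open>Uniformity of affine images\<close>

lemma map_pmf_of_set_equal_fibres:
  assumes fV: "finite V" and V: "V \<noteq> {}" and img: "g ` V = Y"
    and fib: "\<And>y y'. y \<in> Y \<Longrightarrow> y' \<in> Y \<Longrightarrow> card {x\<in>V. g x = y} \<le> card {x\<in>V. g x = y'}"
  shows "map_pmf g (pmf_of_set V) = pmf_of_set Y"
proof -
  have fY: "finite Y" and Y: "Y \<noteq> {}" using img fV V by auto
  then obtain y0 where y0: "y0 \<in> Y" by blast
  define N where "N = card {x\<in>V. g x = y0}"
  have fibN: "card {x\<in>V. g x = y} = N" if "y \<in> Y" for y
    using fib[OF that y0] fib[OF y0 that] by (simp add: N_def)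
  have "card V = card (\<Union>y\<in>Y. {x\<in>V. g x = y})" using img by (intro arg_cong[where f = card]) blast
  also have "\<dots> = (\<Sum>y\<in>Y. card {x\<in>V. g x = y})" using fY fV by (intro card_UN_disjoint) auto
  finally have cV: "card V = card Y * N" using fibN by simp
  then have N0: "N \<noteq> 0" using fV V by auto
  show ?thesis
  proof (rule pmf_eqI)
    fix y
    have p: "pmf (map_pmf g (pmf_of_set V)) y = card {x\<in>V. g x = y} / card V"
      using fV V by (simp add: pmf_map measure_pmf_of_set vimage_def Int_def conj_commute)
    show "pmf (map_pmf g (pmf_of_set V)) y = pmf (pmf_of_set Y) y"
    proof (cases "y \<in> Y")
      case True
      then show ?thesis using p cV fibN N0 fY Y by simp
    next
      case False
      then have "card {x\<in>V. g x = y} = 0" using img by (auto simp: card_eq_0_iff)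
      then show ?thesis using p False fY Y by simp
    qed
  qed
qed

lemma mat_vec_add: "mat_vec N r k (\<lambda>i. x i + t i) = (\<lambda>l. mat_vec N r k x l + mat_vec N r k t l)"
  by (simp add: mat_vec_def fun_eq_iff distrib_left sum.distrib)

lemma affine_map_uniform:
  fixes N :: "nat \<Rightarrow> nat \<Rightarrow> 'a::{finite,field}"
  assumes onto: "mat_vec N r k ` vecs k = vecs r" and b: "b \<in> vecs r"
  shows "map_pmf (\<lambda>x l. mat_vec N r k x l + b l) (pmf_of_set (vecs k)) = pmf_of_set (vecs r)"
proof (rule map_pmf_of_set_equal_fibres[OF finite_vecs vecs_nonempty])
  let ?g = "\<lambda>x l. mat_vec N r k x l + b l"
  have solve: "\<exists>x\<in>vecs k. mat_vec N r k x = z" if "z \<in> vecs r" for z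
    using that unfolding onto[symmetric] by blast
  show "?g ` vecs k = vecs r"
  proof
    show "?g ` vecs k \<subseteq> vecs r" using b by (auto simp: vecs_def mat_vec_def)
    show "vecs r \<subseteq> ?g ` vecs k"
    proof
      fix z :: "nat \<Rightarrow> 'a" assume "z \<in> vecs r"
      then obtain x where "x \<in> vecs k" "mat_vec N r k x = (\<lambda>l. z l - b l)"
        using solve[of "\<lambda>l. z l - b l"] b by (auto simp: vecs_def)
      then show "z \<in> ?g ` vecs k" by (intro image_eqI[of _ _ x]) (simp_all add: fun_eq_iff)
    qed
  qed
  fix y y' :: "nat \<Rightarrow> 'a" assume "y \<in> vecs r" "y' \<in> vecs r"
  then obtain t where t: "t \<in> vecs k" "mat_vec N r k t = (\<lambda>l. y' l - y l)"
    using solve[of "\<lambda>l. y' l - y l"] by (auto simp: vecs_def)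
  \<comment> \<open>translation by a solution of \<open>N t = y' - y\<close> maps the fibre over \<open>y\<close> into that over \<open>y'\<close>\<close>
  have "(\<lambda>x i. x i + t i) ` {x\<in>vecs k. ?g x = y} \<subseteq> {x\<in>vecs k. ?g x = y'}"
  proof (rule image_subsetI)
    fix x assume "x \<in> {x\<in>vecs k. ?g x = y}"
    then have x: "x \<in> vecs k" and gx: "?g x = y" by simp_all
    have "mat_vec N r k x l + (y' l - y l) + b l = y' l" for l
      using fun_cong[OF gx, of l] by (simp add: algebra_simps)
    then show "(\<lambda>i. x i + t i) \<in> {x\<in>vecs k. ?g x = y'}"
      using x t by (simp add: vecs_def mat_vec_add fun_eq_iff)
  qed
  moreover have "inj_on (\<lambda>x i. x i + t i) {x\<in>vecs k. ?g x = y}"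
    by (rule inj_onI) (simp add: fun_eq_iff)
  ultimately show "card {x\<in>vecs k. ?g x = y} \<le> card {x\<in>vecs k. ?g x = y'}"
    by (intro card_inj_on_le) (simp_all add: finite_vecs)
qed

lemma affine_source_eq_map_pmf:
  fixes A :: "nat \<Rightarrow> nat \<Rightarrow> 'a::{finite,field}"
  assumes rk: "mat_rank UNIV A k n = k"
  shows "affine_source A \<beta> k n = map_pmf (\<lambda>x j. vec_mat x A k n j + \<beta> j) (pmf_of_set (vecs k))"
proof -
  have "inj_on (\<lambda>x j. vec_mat x A k n j + \<beta> j) (vecs k)"
    using full_rank_imp_inj_vec_mat[OF rk] by (auto simp: inj_on_def fun_eq_iff)
  then show ?thesis
    unfolding affine_source_def by (rule map_pmf_of_set_inj[OF _ vecs_nonempty finite_vecs, symmetric])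
qed

lemma mat_vec_affine:
  "mat_vec G kt n (\<lambda>j. vec_mat x A k n j + \<beta> j) =
     (\<lambda>l. mat_vec (\<lambda>l i. \<Sum>j<n. G l j * A i j) kt k x l + mat_vec G kt n \<beta> l)"
proof -
  have "(\<Sum>j<n. G l j * (\<Sum>i<k. A i j * x i)) = (\<Sum>i<k. (\<Sum>j<n. G l j * A i j) * x i)" for l
    by (rule sum_bilinear_swap)
  then show ?thesis
    by (simp add: mat_vec_def vec_mat_def fun_eq_iff distrib_left sum.distrib mult.commute)
qed

lemma extractor_onto:
  assumes ext: "restricted_extractor F E n kt t" and "t \<le> k"
    and "\<forall>i<k. \<forall>j<n. A i j \<in> F" "mat_rank UNIV A k n = k" "\<beta> \<in> vecs n"
  shows "E ` ((\<lambda>x j. vec_mat x A k n j + \<beta> j) ` vecs k) = (vecs kt :: (nat \<Rightarrow> 'a::{finite,field}) set)"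
proof -
  have "map_pmf E (affine_source A \<beta> k n) = pmf_of_set (vecs kt)"
    using assms unfolding restricted_extractor_def by blast
  then have "set_pmf (map_pmf E (affine_source A \<beta> k n)) = vecs kt"
    by (simp add: finite_vecs vecs_nonempty)
  then show ?thesis by (simp add: affine_source_def finite_vecs vecs_nonempty)
qed

section \<open>The extractor property\<close>

lemma sum_mat_vec_eq_sum_vec_mat:
  "(\<Sum>l<r. y l * mat_vec G r c v l) = (\<Sum>j<c. vec_mat y G r c j * v j)"
  by (simp add: mat_vec_def vec_mat_def sum_bilinear_swap)

lemma rank_code_gen_imp_extractor:
  fixes F :: "'a::{finite,field} set" and G :: "nat \<Rightarrow> nat \<Rightarrow> 'a"
  assumes K: "is_subfield F" and iso: "is_coord_iso F m phi"
    and gen: "is_rank_code_gen F m phi G n kt d"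
  shows "restricted_extractor F (mat_vec G kt n) n kt (n - d + 1)"
  unfolding restricted_extractor_def
proof (intro allI impI, elim conjE)
  fix k and A :: "nat \<Rightarrow> nat \<Rightarrow> 'a" and \<beta> :: "nat \<Rightarrow> 'a"
  assume k: "n - d + 1 \<le> k" and AF: "\<forall>i<k. \<forall>j<n. A i j \<in> F"
    and rkA: "mat_rank UNIV A k n = k" and "\<beta> \<in> vecs n"
  have rkG: "mat_rank UNIV G kt n = kt"
    and dmin: "\<And>c. c \<in> code_of G kt n \<Longrightarrow> c \<noteq> (\<lambda>_. 0) \<Longrightarrow> d \<le> rank_wt F m phi n c"
    using gen unfolding is_rank_code_gen_def by auto
  define N where "N = (\<lambda>l i. \<Sum>j<n. G l j * A i j)"
  have "inj_on (\<lambda>y. vec_mat y N kt k) (vecs kt)"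
    unfolding inj_on_vec_mat_iff_kernel
  proof (intro ballI impI)
    fix y assume y: "y \<in> vecs kt" and yN: "vec_mat y N kt k = (\<lambda>_. 0)"
    define c where "c = vec_mat y G kt n"
    have "(\<Sum>j<n. A i j * c j) = 0" if "i < k" for i
    proof -
      have "(\<Sum>j<n. A i j * c j) = (\<Sum>l<kt. y l * mat_vec G kt n (\<lambda>j. A i j) l)"
        by (simp add: sum_mat_vec_eq_sum_vec_mat c_def mult.commute)
      also have "\<dots> = vec_mat y N kt k i" using that by (simp add: vec_mat_def mat_vec_def N_def)
      finally show ?thesis using yN by simp
    qed
    then have "rank_wt F m phi n c + k \<le> n" by (intro rank_wt_add_le[OF K iso AF rkA]) simp
    then have "c = (\<lambda>_. 0)" using dmin[of c] y k by (force simp: c_def code_of_def)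
    then show "y = (\<lambda>_. 0)"
      using y full_rank_imp_inj_vec_mat[OF rkG] by (simp add: inj_on_vec_mat_iff_kernel c_def)
  qed
  then have "mat_vec N kt k ` vecs k = vecs kt"
    by (intro full_rank_imp_mat_vec_onto inj_vec_mat_imp_full_rank)
  from affine_map_uniform[OF this mat_vec_in_vecs]
  show "map_pmf (mat_vec G kt n) (affine_source A \<beta> k n) = pmf_of_set (vecs kt)"
    by (simp add: affine_source_eq_map_pmf[OF rkA] map_pmf_comp mat_vec_affine N_def)
qed

lemma extractor_imp_full_rank:
  fixes F :: "'a::{finite,field} set" and G :: "nat \<Rightarrow> nat \<Rightarrow> 'a"
  assumes K: "is_subfield F" and ext: "restricted_extractor F (mat_vec G kt n) n kt t" and "t \<le> n"
  shows "mat_rank UNIV G kt n = kt"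
proof (rule mat_vec_onto_imp_full_rank)
  define I :: "nat \<Rightarrow> nat \<Rightarrow> 'a" where "I = (\<lambda>i j. if i = j then 1 else 0)"
  have "mat_rank UNIV I n n = n"
    by (rule mat_rank_unit_columns[of id]) (auto simp: I_def)
  moreover have "\<forall>i<n. \<forall>j<n. I i j \<in> F" using K by (simp add: I_def subfield_zero subfield_one)
  ultimately have "mat_vec G kt n ` ((\<lambda>x j. vec_mat x I n n j + 0) ` vecs n) = vecs kt"
    using extractor_onto[OF ext \<open>t \<le> n\<close>] zero_in_vecs by blast
  moreover have "(\<lambda>j. vec_mat x I n n j + 0) = x" if "x \<in> vecs n" for x :: "nat \<Rightarrow> 'a"
    using that by (auto simp: vec_mat_def I_def vecs_def fun_eq_iff if_distrib[of "\<lambda>a. _ * a"] cong: if_cong)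
  ultimately show "mat_vec G kt n ` vecs n = vecs kt" by (simp cong: image_cong)
qed

lemma extractor_imp_min_rank_wt:
  fixes F :: "'a::{finite,field} set" and G :: "nat \<Rightarrow> nat \<Rightarrow> 'a"
  assumes K: "is_subfield F" and iso: "is_coord_iso F m phi" and "d \<le> n"
    and ext: "restricted_extractor F (mat_vec G kt n) n kt (n - d + 1)"
    and c: "c \<in> code_of G kt n" "c \<noteq> (\<lambda>_. 0)"
  shows "d \<le> rank_wt F m phi n c"
proof (rule ccontr)
  define k where "k = n - rank_wt F m phi n c"
  assume "\<not> d \<le> rank_wt F m phi n c"
  then have "n - d + 1 \<le> k" using \<open>d \<le> n\<close> by (simp add: k_def)
  moreover obtain A where AF: "\<forall>i<k. \<forall>j<n. A i j \<in> F" and rkA: "mat_rank UNIV A k n = k"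
    and orth: "\<forall>i<k. (\<Sum>j<n. A i j * c j) = 0"
    using exists_orthogonal_restricted_matrix[OF K iso] unfolding k_def by blast
  ultimately have onto: "mat_vec G kt n ` ((\<lambda>x j. vec_mat x A k n j + 0) ` vecs k) = vecs kt"
    using extractor_onto[OF ext _ AF rkA zero_in_vecs] by blast
  obtain y where y: "y \<in> vecs kt" "c = vec_mat y G kt n" using c(1) by (auto simp: code_of_def)
  then have "y \<noteq> (\<lambda>_. 0)" using c(2) by auto
  then obtain l0 where "y l0 \<noteq> 0" by auto
  then have l0: "l0 < kt" "y l0 \<noteq> 0" using y(1) by (auto simp: vecs_def not_less[symmetric])
  then have "(\<lambda>l. if l = l0 then 1 else 0) \<in> (vecs kt :: (nat \<Rightarrow> 'a) set)" by (simp add: vecs_def)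
  \<comment> \<open>all outputs of the extractor on this source are orthogonal to \<open>y\<close>, yet every vector occurs\<close>
  then obtain x where x: "(\<lambda>l. if l = l0 then 1 else 0) = mat_vec G kt n (\<lambda>j. vec_mat x A k n j + 0)"
    using onto by blast
  have "y l0 = (\<Sum>l<kt. if l = l0 then y l else 0)" using l0 by simp
  also have "\<dots> = (\<Sum>l<kt. y l * mat_vec G kt n (\<lambda>j. vec_mat x A k n j + 0) l)"
    using x[symmetric] by (intro sum.cong) (simp_all add: fun_eq_iff)
  also have "\<dots> = (\<Sum>j<n. vec_mat x A k n j * c j)"
    by (simp add: sum_mat_vec_eq_sum_vec_mat y(2) mult.commute)
  also have "\<dots> = 0" by (rule orthogonal_rows_sum[OF orth])
  finally show False using l0 by simp
qed

theorem mainTheorem6: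
  fixes F :: "'a::{finite,field} set"
    and m n kt d :: nat
    and phi :: "'a \<Rightarrow> nat \<Rightarrow> 'a"
    and G :: "nat \<Rightarrow> nat \<Rightarrow> 'a"
  assumes "is_subfield F"
    and "1 \<le> m"
    and "is_coord_iso F m phi"
  shows "(is_rank_code_gen F m phi G n kt d \<longrightarrow>
            restricted_extractor F (mat_vec G kt n) n kt (n - d + 1))
       \<and> (1 \<le> d \<and> d \<le> n \<and> restricted_extractor F (mat_vec G kt n) n kt (n - d + 1) \<longrightarrow>
            mat_rank UNIV G kt n = kt \<and>
            (\<forall>c\<in>code_of G kt n. c \<noteq> (\<lambda>_. 0) \<longrightarrow> d \<le> rank_wt F m phi n c))"
  using rank_code_gen_imp_extractor[OF assms(1,3)]
    extractor_imp_full_rank[OF assms(1), of G kt n "n - d + 1"]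
    extractor_imp_min_rank_wt[OF assms(1,3)]
  by auto

end
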